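(* Let $a,c\in\mathbb{C}\setminus\{0\}$ and $b,d\in\mathbb{C}$ with $ad-bc\neq 0$, and let $M(z)=\dfrac{az+b}{cz+d}$. Then $St_M$ has no irrationally indifferent fixed point, and consequently the Fatou set of $St_M$ contains no invariant Siegel disc.
   Context: For a non-constant rational function $f$, Stirling's iterative root-finding method is $St_f(z)=z-\dfrac{f(z)}{f'\big(z-f(z)\big)}$, regarded as a rational self-map of $\widehat{\mathbb{C}}$. A fixed point is irrationally indifferent if its multiplier is $e^{2\pi i\theta}$ with $\theta\in\mathbb{R}\setminus\mathbb{Q}$. An invariant Siegel disc is a Fatou component $U$ with $St_M(U)=U$ on which $St_M$ is conformally conjugate to an irrational rotation of the unit disc. *)

theory Defs
  imports "HOL-Complex_Analysis.Complex_Analysis"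
begin

text \<open>The Riemann sphere is modelled as complex option; None is the point at infinity.\<close>

definition Stirling :: "(complex \<Rightarrow> complex) \<Rightarrow> complex \<Rightarrow> complex" where
  "Stirling f z = z - f z / deriv f (z - f z)"

definition mobius :: "complex \<Rightarrow> complex \<Rightarrow> complex \<Rightarrow> complex \<Rightarrow> complex \<Rightarrow> complex" where
  "mobius a b c d z = (a * z + b) / (c * z + d)"

definition inf_chart :: "complex \<Rightarrow> complex option" where
  "inf_chart w = (if w = 0 then None else Some (1 / w))"

text \<open>Extension of a rational function (given by a formula on C, possibly with
  finitely many removable glitches) to a self-map of the Riemann sphere: the value
  at a point is the limit of the formula there, and infinity if there is no finite limit.\<close>
definition sphere_ext :: "(complex \<Rightarrow> complex) \<Rightarrow> complex option \<Rightarrow> complex option" where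
  "sphere_ext R p = (case p of
      Some z \<Rightarrow> (if \<exists>L. (R \<longlongrightarrow> L) (at z) then Some (Lim (at z) R) else None)
    | None \<Rightarrow> (if \<exists>L. ((\<lambda>w. R (1 / w)) \<longlongrightarrow> L) (at 0)
               then Some (Lim (at 0) (\<lambda>w. R (1 / w))) else None))"

definition fixed_point_multiplier ::
  "(complex option \<Rightarrow> complex option) \<Rightarrow> complex option \<Rightarrow> complex \<Rightarrow> bool" where
  "fixed_point_multiplier F p lam = (F p = p \<and> (case p of
      Some z0 \<Rightarrow> ((\<lambda>z. case F (Some z) of Some v \<Rightarrow> v | None \<Rightarrow> 0)
                    has_field_derivative lam) (at z0)
    | None \<Rightarrow> ((\<lambda>w. case F (inf_chart w) of Some v \<Rightarrow> 1 / v | None \<Rightarrow> 0)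
                    has_field_derivative lam) (at 0)))"

definition irrationally_indifferent_fixed_point ::
  "(complex option \<Rightarrow> complex option) \<Rightarrow> complex option \<Rightarrow> bool" where
  "irrationally_indifferent_fixed_point F p =
     (\<exists>\<theta>::real. \<theta> \<notin> \<rat> \<and>
        fixed_point_multiplier F p (exp (2 * complex_of_real pi * \<i> * complex_of_real \<theta>)))"

definition chordal :: "complex option \<Rightarrow> complex option \<Rightarrow> real" where
  "chordal p q = (case (p, q) of
      (Some z, Some w) \<Rightarrow> 2 * cmod (z - w) / (sqrt (1 + (cmod z)\<^sup>2) * sqrt (1 + (cmod w)\<^sup>2))
    | (Some z, None) \<Rightarrow> 2 / sqrt (1 + (cmod z)\<^sup>2)
    | (None, Some w) \<Rightarrow> 2 / sqrt (1 + (cmod w)\<^sup>2)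
    | (None, None) \<Rightarrow> 0)"

definition sphere_open :: "complex option set \<Rightarrow> bool" where
  "sphere_open U = (\<forall>p\<in>U. \<exists>e>0. \<forall>q. chordal p q < e \<longrightarrow> q \<in> U)"

definition sphere_connected :: "complex option set \<Rightarrow> bool" where
  "sphere_connected U = (\<not> (\<exists>A B. sphere_open A \<and> sphere_open B \<and> U \<subseteq> A \<union> B \<and>
      A \<inter> B \<inter> U = {} \<and> A \<inter> U \<noteq> {} \<and> B \<inter> U \<noteq> {}))"

definition normal_iterates_on ::
  "(complex option \<Rightarrow> complex option) \<Rightarrow> complex option set \<Rightarrow> bool" where
  "normal_iterates_on F V = (\<forall>ns :: nat \<Rightarrow> nat. \<exists>(r :: nat \<Rightarrow> nat) (g :: complex option \<Rightarrow> complex option). strict_mono r \<and>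
      (\<forall>q\<in>V. \<exists>e>0. {x. chordal q x < e} \<subseteq> V \<and>
         (\<forall>\<epsilon>>0. \<exists>N. \<forall>k\<ge>N. \<forall>x. chordal q x < e \<longrightarrow>
              chordal ((F ^^ ns (r k)) x) (g x) < \<epsilon>)))"

definition fatou_set :: "(complex option \<Rightarrow> complex option) \<Rightarrow> complex option set" where
  "fatou_set F = {p. \<exists>V. sphere_open V \<and> p \<in> V \<and> normal_iterates_on F V}"

definition fatou_component ::
  "(complex option \<Rightarrow> complex option) \<Rightarrow> complex option set \<Rightarrow> bool" where
  "fatou_component F U = (U \<noteq> {} \<and> sphere_connected U \<and> U \<subseteq> fatou_set F \<and>
      (\<forall>W. sphere_connected W \<and> W \<subseteq> fatou_set F \<and> U \<subseteq> W \<longrightarrow> W = U))"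

definition sphere_holomorphic_on :: "(complex option \<Rightarrow> complex) \<Rightarrow> complex option set \<Rightarrow> bool" where
  "sphere_holomorphic_on \<phi> U =
     ((\<lambda>z. \<phi> (Some z)) holomorphic_on {z. Some z \<in> U} \<and>
      (\<lambda>w. \<phi> (inf_chart w)) holomorphic_on {w. inf_chart w \<in> U})"

definition invariant_siegel_disc ::
  "(complex option \<Rightarrow> complex option) \<Rightarrow> complex option set \<Rightarrow> bool" where
  "invariant_siegel_disc F U = (fatou_component F U \<and> F ` U = U \<and>
     (\<exists>\<phi> (\<theta>::real). \<theta> \<notin> \<rat> \<and> bij_betw \<phi> U (ball 0 1) \<and> sphere_holomorphic_on \<phi> U \<and>
        (\<forall>p\<in>U. \<phi> (F p) = exp (2 * complex_of_real pi * \<i> * complex_of_real \<theta>) * \<phi> p)))"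

end

theory Submission
  imports Defs
begin

text \<open>Writing the multiplier of a fixed point of \<open>St_M\<close> in a standard chart, one computes that it
  is always 0 or 1: the finite fixed points are the zero \<open>-b/a\<close> of \<open>M\<close> (superattracting) and the
  zeros of \<open>(cz+d)\<^sup>2 - c(az+b)\<close>, where \<open>St_M\<close> is tangent to the identity; infinity is a
  superattracting fixed point. An irrational rotation factor is neither 0 nor 1. For a Siegel
  disc, the linearising map is injective and holomorphic near the centre, so differentiating
  the conjugacy at the centre shows that the multiplier there equals the rotation factor.\<close>

subsection \<open>Topology of the Riemann sphere\<close>

definition chordal_continuous :: "(complex \<Rightarrow> complex option) \<Rightarrow> bool" where
  "chordal_continuous \<kappa> \<longleftrightarrow>
     (\<forall>z \<epsilon>. \<epsilon> > 0 \<longrightarrow> eventually (\<lambda>w. chordal (\<kappa> z) (\<kappa> w) < \<epsilon>) (nhds z))"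

lemma open_vimage_chordal_continuous:
  assumes "chordal_continuous \<kappa>" "sphere_open X"
  shows "open {z. \<kappa> z \<in> X}"
proof (rule open_subopen[THEN iffD2], rule ballI)
  fix z assume "z \<in> {z. \<kappa> z \<in> X}"
  then obtain e where e: "e > 0" "\<forall>q. chordal (\<kappa> z) q < e \<longrightarrow> q \<in> X"
    using assms(2) unfolding sphere_open_def by blast
  have "eventually (\<lambda>w. chordal (\<kappa> z) (\<kappa> w) < e) (nhds z)"
    using assms(1) e(1) unfolding chordal_continuous_def by blast
  then obtain T where "open T" "z \<in> T" "\<forall>w\<in>T. chordal (\<kappa> z) (\<kappa> w) < e"
    unfolding eventually_nhds by blast
  then show "\<exists>T. open T \<and> z \<in> T \<and> T \<subseteq> {z. \<kappa> z \<in> X}" using e(2) by blast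
qed

lemma sphere_connected_image:
  assumes "chordal_continuous \<kappa>" "connected T"
  shows "sphere_connected (\<kappa> ` T)"
  unfolding sphere_connected_def
proof
  assume "\<exists>A B. sphere_open A \<and> sphere_open B \<and> \<kappa> ` T \<subseteq> A \<union> B \<and>
      A \<inter> B \<inter> \<kappa> ` T = {} \<and> A \<inter> \<kappa> ` T \<noteq> {} \<and> B \<inter> \<kappa> ` T \<noteq> {}"
  then obtain A B where AB: "sphere_open A" "sphere_open B" "\<kappa> ` T \<subseteq> A \<union> B"
      "A \<inter> B \<inter> \<kappa> ` T = {}" "A \<inter> \<kappa> ` T \<noteq> {}" "B \<inter> \<kappa> ` T \<noteq> {}" by blast
  have "{z. \<kappa> z \<in> A} \<inter> T = {} \<or> {z. \<kappa> z \<in> B} \<inter> T = {}"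
    by (rule connectedD[OF assms(2)
          open_vimage_chordal_continuous[OF assms(1) AB(1)]
          open_vimage_chordal_continuous[OF assms(1) AB(2)]])
      (use AB(3,4) in blast)+
  then show False using AB(5,6) by blast
qed

lemma sphere_connected_Un:
  assumes "sphere_connected A" "sphere_connected B" "p \<in> A" "p \<in> B"
  shows "sphere_connected (A \<union> B)"
  unfolding sphere_connected_def
proof
  assume "\<exists>X Y. sphere_open X \<and> sphere_open Y \<and> A \<union> B \<subseteq> X \<union> Y \<and>
      X \<inter> Y \<inter> (A \<union> B) = {} \<and> X \<inter> (A \<union> B) \<noteq> {} \<and> Y \<inter> (A \<union> B) \<noteq> {}"
  then obtain X Y where XY: "sphere_open X" "sphere_open Y" "A \<union> B \<subseteq> X \<union> Y"
      "X \<inter> Y \<inter> (A \<union> B) = {}" "X \<inter> (A \<union> B) \<noteq> {}" "Y \<inter> (A \<union> B) \<noteq> {}" by blast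
  have side: "S \<subseteq> X \<or> S \<subseteq> Y" if "sphere_connected S" "S \<subseteq> A \<union> B" for S
  proof -
    have "S \<subseteq> X \<union> Y" "X \<inter> Y \<inter> S = {}" using that(2) XY(3,4) by blast+
    then have "\<not> (X \<inter> S \<noteq> {} \<and> Y \<inter> S \<noteq> {})"
      using that(1) XY(1,2) unfolding sphere_connected_def by blast
    then show ?thesis using \<open>S \<subseteq> X \<union> Y\<close> by blast
  qed
  have "A \<subseteq> X \<or> A \<subseteq> Y" "B \<subseteq> X \<or> B \<subseteq> Y" using side assms(1,2) by blast+
  then show False using XY(4,5,6) assms(3,4) by blast
qed

lemma fatou_component_contains_image_ball:
  assumes "fatou_component F U" "\<kappa> z0 \<in> U" "chordal_continuous \<kappa>"
  obtains r where "r > 0" "\<kappa> ` ball z0 r \<subseteq> U"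
proof -
  have "\<kappa> z0 \<in> fatou_set F" using assms(1,2) unfolding fatou_component_def by blast
  then obtain V where V: "sphere_open V" "\<kappa> z0 \<in> V" "normal_iterates_on F V"
    unfolding fatou_set_def by blast
  then have "V \<subseteq> fatou_set F" unfolding fatou_set_def by blast
  obtain e where e: "e > 0" "\<forall>q. chordal (\<kappa> z0) q < e \<longrightarrow> q \<in> V"
    using V unfolding sphere_open_def by blast
  have "eventually (\<lambda>w. chordal (\<kappa> z0) (\<kappa> w) < e) (nhds z0)"
    using assms(3) e(1) unfolding chordal_continuous_def by blast
  then obtain r where r: "r > 0" "\<forall>w. dist w z0 < r \<longrightarrow> chordal (\<kappa> z0) (\<kappa> w) < e"
    unfolding eventually_nhds_metric by blast
  define W where "W = \<kappa> ` ball z0 r"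
  have "W \<subseteq> V" using r e unfolding W_def by (auto simp: dist_commute)
  have "\<kappa> z0 \<in> W" using r unfolding W_def by simp
  then have "sphere_connected (U \<union> W)"
    using sphere_connected_Un[OF _ sphere_connected_image[OF assms(3) connected_ball] assms(2)]
      assms(1) unfolding fatou_component_def W_def by blast
  moreover have "U \<union> W \<subseteq> fatou_set F"
    using \<open>W \<subseteq> V\<close> \<open>V \<subseteq> fatou_set F\<close> assms(1) unfolding fatou_component_def by blast
  ultimately have "U \<union> W = U" using assms(1) unfolding fatou_component_def by blast
  then show ?thesis using that r W_def by blast
qed

lemma chordal_Some_Some_le: "chordal (Some z) (Some w) \<le> 2 * cmod (z - w)"
proof -
  have s: "1 \<le> sqrt (1 + (cmod z)\<^sup>2)" "1 \<le> sqrt (1 + (cmod w)\<^sup>2)" by auto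
  then have "1 \<le> sqrt (1 + (cmod z)\<^sup>2) * sqrt (1 + (cmod w)\<^sup>2)"
    using mult_mono[OF s] by simp
  then show ?thesis unfolding chordal_def
    by (simp add: divide_le_eq mult_le_cancel_left1)
qed

lemma chordal_None_Some_inverse_le:
  assumes "w \<noteq> 0"
  shows "chordal None (Some (1 / w)) \<le> 2 * cmod w"
proof -
  have pos: "cmod (1 / w) > 0" using assms by simp
  have "cmod (1 / w) \<le> sqrt (1 + (cmod (1 / w))\<^sup>2)" by (rule real_le_rsqrt) simp
  then have "2 / sqrt (1 + (cmod (1 / w))\<^sup>2) \<le> 2 / cmod (1 / w)"
  proof (rule divide_left_mono)
    show "0 < sqrt (1 + (cmod (1 / w))\<^sup>2) * cmod (1 / w)"
      using pos by (intro mult_pos_pos) (auto intro: add_pos_nonneg)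
  qed simp
  also have "\<dots> = 2 * cmod w" using assms by (simp add: norm_divide)
  finally show ?thesis unfolding chordal_def by simp
qed

lemma chordal_continuous_Some: "chordal_continuous Some"
  unfolding chordal_continuous_def
proof (intro allI impI)
  fix z :: complex and e :: real assume "e > 0"
  then have "eventually (\<lambda>w. dist w z < e / 2) (nhds z)"
    unfolding eventually_nhds_metric by (intro exI[of _ "e / 2"]) auto
  then show "eventually (\<lambda>w. chordal (Some z) (Some w) < e) (nhds z)"
  proof eventually_elim
    case (elim w)
    then show ?case
      using chordal_Some_Some_le[of z w] by (simp add: dist_norm norm_minus_commute)
  qed
qed

lemma chordal_continuous_inf_chart: "chordal_continuous inf_chart"
  unfolding chordal_continuous_def
proof (intro allI impI)
  fix z :: complex and e :: real assume e: "e > 0"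
  show "eventually (\<lambda>w. chordal (inf_chart z) (inf_chart w) < e) (nhds z)"
  proof (cases "z = 0")
    case True
    have "eventually (\<lambda>w. dist w z < e / 2) (nhds z)"
      using e unfolding eventually_nhds_metric by (intro exI[of _ "e / 2"]) auto
    then show ?thesis
    proof eventually_elim
      case (elim w)
      show ?case
      proof (cases "w = 0")
        case True
        then show ?thesis using e \<open>z = 0\<close> by (simp add: inf_chart_def chordal_def)
      next
        case False
        then show ?thesis
          using chordal_None_Some_inverse_le[of w] elim \<open>z = 0\<close>
          by (simp add: inf_chart_def dist_norm)
      qed
    qed
  next
    case False
    have "((\<lambda>w. 1 / w) \<longlongrightarrow> 1 / z) (nhds z)"
      using False by (intro tendsto_intros filterlim_ident)
    then have "eventually (\<lambda>w. dist (1 / w) (1 / z) < e / 2) (nhds z)"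
      using e unfolding tendsto_iff by (metis half_gt_zero)
    moreover have "eventually (\<lambda>w. w \<noteq> 0) (nhds z)"
      using False by (rule t1_space_nhds)
    ultimately show ?thesis
    proof eventually_elim
      case (elim w)
      then show ?case
        using chordal_Some_Some_le[of "1 / z" "1 / w"] False
        by (simp add: inf_chart_def dist_norm norm_minus_commute)
    qed
  qed
qed

definition sphere_chart :: "complex option \<Rightarrow> complex \<Rightarrow> complex option" where
  "sphere_chart p = (case p of Some _ \<Rightarrow> Some | None \<Rightarrow> inf_chart)"

definition chart_point :: "complex option \<Rightarrow> complex" where
  "chart_point p = (case p of Some z \<Rightarrow> z | None \<Rightarrow> 0)"

definition chart_representative ::
  "(complex option \<Rightarrow> complex option) \<Rightarrow> complex option \<Rightarrow> (complex \<Rightarrow> complex) \<Rightarrow> bool" where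
  "chart_representative F p g \<longleftrightarrow>
     eventually (\<lambda>z. F (sphere_chart p z) = sphere_chart p (g z)) (nhds (chart_point p))"

lemma sphere_chart_chart_point [simp]: "sphere_chart p (chart_point p) = p"
  by (cases p) (auto simp: sphere_chart_def chart_point_def inf_chart_def)

lemma inj_sphere_chart: "inj (sphere_chart p)"
  by (cases p) (auto simp: sphere_chart_def inj_def inf_chart_def split: if_splits)

lemma chordal_continuous_sphere_chart: "chordal_continuous (sphere_chart p)"
  by (cases p) (simp_all add: sphere_chart_def chordal_continuous_Some chordal_continuous_inf_chart)

lemma sphere_holomorphic_on_chart:
  "sphere_holomorphic_on \<phi> U \<Longrightarrow>
     (\<lambda>z. \<phi> (sphere_chart p z)) holomorphic_on {z. sphere_chart p z \<in> U}"
  by (cases p) (simp_all add: sphere_chart_def sphere_holomorphic_on_def)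

lemma chart_representative_fixed:
  assumes "chart_representative F p g" "F p = p"
  shows "g (chart_point p) = chart_point p"
proof -
  have "sphere_chart p (g (chart_point p)) = sphere_chart p (chart_point p)"
    using eventually_nhds_x_imp_x[OF assms(1)[unfolded chart_representative_def]] assms(2)
    by simp
  then show ?thesis by (rule injD[OF inj_sphere_chart])
qed

lemma fixed_point_multiplier_eq_deriv:
  assumes "fixed_point_multiplier F p L" "chart_representative F p g"
    and "(g has_field_derivative L') (at (chart_point p))"
  shows "L = L'"
proof (cases p)
  case None
  \<comment> \<open>this also holds where \<open>g w = 0\<close>, as \<open>inf_chart 0 = None\<close> is read back as 0\<close>
  have "eventually (\<lambda>w. (case F (inf_chart w) of Some v \<Rightarrow> 1 / v | None \<Rightarrow> 0) = g w) (nhds 0)"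
    using assms(2) None unfolding chart_representative_def
    by (simp add: sphere_chart_def chart_point_def)
      (elim eventually_mono, simp add: inf_chart_def)
  moreover have "((\<lambda>w. case F (inf_chart w) of Some v \<Rightarrow> 1 / v | None \<Rightarrow> 0)
      has_field_derivative L) (at 0)"
    using assms(1) None by (simp add: fixed_point_multiplier_def)
  ultimately have "(g has_field_derivative L) (at 0)"
    by (subst (asm) DERIV_cong_ev[OF refl _ refl])
  then show ?thesis using assms(3) None DERIV_unique by (auto simp: chart_point_def)
next
  case (Some z0)
  have "eventually (\<lambda>z. (case F (Some z) of Some v \<Rightarrow> v | None \<Rightarrow> 0) = g z) (nhds z0)"
    using assms(2) Some unfolding chart_representative_def
    by (simp add: sphere_chart_def chart_point_def) (elim eventually_mono, simp)
  moreover have "((\<lambda>z. case F (Some z) of Some v \<Rightarrow> v | None \<Rightarrow> 0)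
      has_field_derivative L) (at z0)"
    using assms(1) Some by (simp add: fixed_point_multiplier_def)
  ultimately have "(g has_field_derivative L) (at z0)"
    by (subst (asm) DERIV_cong_ev[OF refl _ refl])
  then show ?thesis using assms(3) Some DERIV_unique by (auto simp: chart_point_def)
qed

lemma deriv_eq_of_conjugacy:
  fixes f g :: "complex \<Rightarrow> complex"
  assumes "f holomorphic_on ball z0 r" "r > 0" "inj_on f (ball z0 r)"
    and "(g has_field_derivative L) (at z0)" "g z0 = z0"
    and "eventually (\<lambda>z. f (g z) = e * f z) (nhds z0)"
  shows "L = e"
proof -
  have z0: "z0 \<in> ball z0 r" using assms(2) by simp
  have "deriv f z0 \<noteq> 0"
    by (rule holomorphic_injective_imp_regular[OF assms(1) open_ball assms(3) z0])
  have df: "(f has_field_derivative deriv f z0) (at z0)"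
    by (rule holomorphic_derivI[OF assms(1) open_ball z0])
  have "((\<lambda>z. f (g z)) has_field_derivative deriv f z0 * L) (at z0)"
    using DERIV_chain[of f "deriv f z0" g z0 L] df assms(4,5) by (simp add: o_def)
  moreover have "((\<lambda>z. f (g z)) has_field_derivative e * deriv f z0) (at z0)"
    by (subst DERIV_cong_ev[OF refl assms(6) refl]) (rule DERIV_cmult[OF df])
  ultimately have "deriv f z0 * L = e * deriv f z0" using DERIV_unique by blast
  then show ?thesis using \<open>deriv f z0 \<noteq> 0\<close> by (simp add: mult.commute)
qed

lemma siegel_fixed_point_multiplier_eq:
  assumes "fatou_component F U" "p \<in> U" "F p = p"
    and "sphere_holomorphic_on \<phi> U" "inj_on \<phi> U" "\<forall>q\<in>U. \<phi> (F q) = e * \<phi> q"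
    and "chart_representative F p g" "(g has_field_derivative L) (at (chart_point p))"
  shows "L = e"
proof -
  define \<kappa> where "\<kappa> = sphere_chart p"
  define z0 where "z0 = chart_point p"
  define f where "f z = \<phi> (\<kappa> z)" for z
  obtain r where r: "r > 0" "\<kappa> ` ball z0 r \<subseteq> U"
    using fatou_component_contains_image_ball[OF assms(1), of \<kappa> z0]
      assms(2) chordal_continuous_sphere_chart by (auto simp: \<kappa>_def z0_def)
  have "f holomorphic_on ball z0 r"
    unfolding f_def \<kappa>_def
    by (rule holomorphic_on_subset[OF sphere_holomorphic_on_chart[OF assms(4)]])
      (use r(2) in \<open>auto simp: \<kappa>_def\<close>)
  moreover have "inj_on f (ball z0 r)"
    unfolding f_def using comp_inj_on[OF inj_on_subset[OF inj_sphere_chart subset_UNIV]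
        inj_on_subset[OF assms(5) r(2)[unfolded \<kappa>_def]]]
    by (simp add: o_def \<kappa>_def)
  moreover have "eventually (\<lambda>z. z \<in> ball z0 r) (nhds z0)"
    using r(1) by (intro eventually_nhds_in_open) auto
  then have "eventually (\<lambda>z. f (g z) = e * f z) (nhds z0)"
    using assms(7)
    unfolding chart_representative_def z0_def[symmetric] \<kappa>_def[symmetric]
  proof eventually_elim
    case (elim z)
    then have "\<kappa> z \<in> U" using r(2) by blast
    then show ?case using assms(6) elim(2) unfolding f_def by metis
  qed
  ultimately show ?thesis
    using deriv_eq_of_conjugacy r(1) assms(8) chart_representative_fixed[OF assms(7,3)]
    by (simp add: z0_def)
qed

lemma exp_2pi_i_irrational_ne_1:
  fixes \<theta> :: real
  assumes "\<theta> \<notin> \<rat>"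
  shows "exp (2 * complex_of_real pi * \<i> * complex_of_real \<theta>) \<noteq> 1"
proof
  assume "exp (2 * complex_of_real pi * \<i> * complex_of_real \<theta>) = 1"
  then obtain n :: int where "2 * pi * \<theta> = of_int (2 * n) * pi" unfolding exp_eq_1 by auto
  then have "\<theta> = of_int n" by (simp add: field_simps)
  then show False using assms by simp
qed

lemma no_irrational_rotation_if_multipliers_0_or_1:
  assumes "\<And>p. F p = p \<Longrightarrow> \<exists>g L. chart_representative F p g \<and>
             (g has_field_derivative L) (at (chart_point p)) \<and> (L = 0 \<or> L = 1)"
  shows "\<not> (\<exists>p. irrationally_indifferent_fixed_point F p)
       \<and> \<not> (\<exists>U. invariant_siegel_disc F U)"
proof (intro conjI notI; elim exE)
  fix p assume "irrationally_indifferent_fixed_point F p"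
  then obtain \<theta> :: real where \<theta>: "\<theta> \<notin> \<rat>"
    and mult: "fixed_point_multiplier F p (exp (2 * complex_of_real pi * \<i> * complex_of_real \<theta>))"
    unfolding irrationally_indifferent_fixed_point_def by blast
  then obtain g L where g: "chart_representative F p g"
      "(g has_field_derivative L) (at (chart_point p))" and "L = 0 \<or> L = 1"
    using assms[of p] by (auto simp: fixed_point_multiplier_def)
  moreover have "exp (2 * complex_of_real pi * \<i> * complex_of_real \<theta>) = L"
    by (rule fixed_point_multiplier_eq_deriv[OF mult g])
  ultimately show False using exp_2pi_i_irrational_ne_1[OF \<theta>] by auto
next
  fix U assume S: "invariant_siegel_disc F U"
  then obtain \<phi> and \<theta> :: real where \<theta>: "\<theta> \<notin> \<rat>" and bij: "bij_betw \<phi> U (ball 0 1)"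
    and hol: "sphere_holomorphic_on \<phi> U"
    and rot: "\<forall>q\<in>U. \<phi> (F q) = exp (2 * complex_of_real pi * \<i> * complex_of_real \<theta>) * \<phi> q"
    unfolding invariant_siegel_disc_def by blast
  have fc: "fatou_component F U" and "F ` U = U"
    using S unfolding invariant_siegel_disc_def by auto
  have inj: "inj_on \<phi> U" using bij bij_betw_imp_inj_on by blast
  obtain p where p: "p \<in> U" "\<phi> p = 0"
    using bij unfolding bij_betw_def by (metis centre_in_ball imageE zero_less_one)
  have "F p \<in> U" "\<phi> (F p) = \<phi> p" using \<open>F ` U = U\<close> rot p by auto
  then have fixed: "F p = p" using inj p(1) by (meson inj_onD)
  then obtain g L where g: "chart_representative F p g"
      "(g has_field_derivative L) (at (chart_point p))" and "L = 0 \<or> L = 1"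
    using assms by blast
  moreover have "L = exp (2 * complex_of_real pi * \<i> * complex_of_real \<theta>)"
    by (rule siegel_fixed_point_multiplier_eq[OF fc p(1) fixed hol inj rot g])
  ultimately show False using exp_2pi_i_irrational_ne_1[OF \<theta>] by auto
qed

subsection \<open>Stirling's method for a Mobius map\<close>

lemma DERIV_divide_numerator_zero:
  fixes f g :: "'a::real_normed_field \<Rightarrow> 'a"
  assumes "(f has_field_derivative f') (at x)" "(g has_field_derivative g') (at x)"
    and "f x = 0" "g x \<noteq> 0"
  shows "((\<lambda>z. f z / g z) has_field_derivative f' / g x) (at x)"
  using DERIV_divide[OF assms(1,2,4)] assms(3,4) by (simp add: power2_eq_square)

locale stirling_mobius =
  fixes a b c d :: complex
  assumes a_nonzero: "a \<noteq> 0" and c_nonzero: "c \<noteq> 0" and det_nonzero: "a * d - b * c \<noteq> 0"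
begin

text \<open>\<open>R\<close> is \<open>St_M\<close> off finitely many points, since \<open>M'(w) = D / (cw+d)\<^sup>2\<close> and
  \<open>c (z - M z) + d = Q z / (cz+d)\<close>.\<close>

definition "D = a * d - b * c"
definition "Q z = (c * z + d)^2 - c * (a * z + b)"
definition "P z = (a * z + b) * (Q z)^2 / (D * (c * z + d)^3)"
definition "R z = z - P z"
definition "F = sphere_ext (Stirling (mobius a b c d))"

lemma D_nonzero: "D \<noteq> 0"
  using det_nonzero by (simp add: D_def)

lemma pole_iff: "c * z + d = 0 \<longleftrightarrow> z = - d / c"
proof
  assume "c * z + d = 0"
  then have "c * z = - d" by (simp add: eq_neg_iff_add_eq_0)
  then show "z = - d / c" using c_nonzero by (simp add: field_simps)
qed (use c_nonzero in simp)

lemma Q_pole_nonzero: "Q (- d / c) \<noteq> 0"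
  using c_nonzero det_nonzero by (simp add: Q_def field_simps)

lemma deriv_mobius:
  assumes "c * w + d \<noteq> 0"
  shows "deriv (mobius a b c d) w = D / (c * w + d)^2"
proof -
  have "(mobius a b c d has_field_derivative (a * (c * w + d) - (a * w + b) * c) / (c * w + d)^2) (at w)"
    unfolding mobius_def[abs_def] using assms
    by (auto intro!: derivative_eq_intros simp: power2_eq_square)
  then show ?thesis by (simp add: DERIV_imp_deriv D_def algebra_simps)
qed

lemma Stirling_eq_R:
  assumes "c * z + d \<noteq> 0" "Q z \<noteq> 0"
  shows "Stirling (mobius a b c d) z = R z"
proof -
  define w where "w = z - mobius a b c d z"
  have w: "c * w + d = Q z / (c * z + d)"
    using assms by (simp add: w_def mobius_def Q_def field_simps power2_eq_square)
  then have "deriv (mobius a b c d) w = D / (Q z / (c * z + d))^2"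
    using assms by (simp add: deriv_mobius)
  then have "Stirling (mobius a b c d) z = z - mobius a b c d z / (D / (Q z / (c * z + d))^2)"
    unfolding Stirling_def w_def by simp
  also have "\<dots> = R z"
    using assms(1) D_nonzero
    by (simp add: R_def P_def mobius_def field_simps power2_eq_square power3_eq_cube)
  finally show ?thesis .
qed

lemma eventually_Stirling_eq_R: "eventually (\<lambda>z. Stirling (mobius a b c d) z = R z) (at z0)"
proof -
  have "Q holomorphic_on UNIV" unfolding Q_def[abs_def] by (intro holomorphic_intros)
  then have "\<forall>\<^sub>F z in at z0. Q z \<noteq> 0 \<and> z \<in> UNIV"
    using Q_pole_nonzero by (intro non_zero_neighbour_alt[where \<beta> = "- d / c"]) auto
  moreover have "eventually (\<lambda>z. z \<noteq> - d / c) (at z0)"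
    by (rule eventually_neq_at_within)
  ultimately show ?thesis
    by eventually_elim (simp add: pole_iff Stirling_eq_R)
qed

lemma F_Some:
  assumes "c * z0 + d \<noteq> 0"
  shows "F (Some z0) = Some (R z0)"
proof -
  have "isCont R z0"
    unfolding R_def[abs_def] P_def[abs_def] Q_def[abs_def] using assms D_nonzero
    by (intro continuous_intros) auto
  then have "(Stirling (mobius a b c d) \<longlongrightarrow> R z0) (at z0)"
    using tendsto_cong[OF eventually_Stirling_eq_R] by (simp add: isCont_def)
  then show ?thesis unfolding F_def sphere_ext_def by (auto intro: tendsto_Lim)
qed

lemma F_pole: "F (Some (- d / c)) = None"
proof -
  define z0 where "z0 = - d / c"
  have "c * z0 + d = 0" "a * z0 + b \<noteq> 0"
    using c_nonzero det_nonzero by (auto simp: z0_def field_simps)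
  have "((\<lambda>z. - ((a * z + b) * (Q z)^2)) \<longlongrightarrow> - ((a * z0 + b) * (Q z0)^2)) (at z0)"
    unfolding Q_def by (intro tendsto_intros)
  moreover have "filterlim (\<lambda>z. D * (c * z + d)^3) (at 0) (at z0)"
  proof (rule filterlim_atI)
    have "((\<lambda>z. D * (c * z + d)^3) \<longlongrightarrow> D * (c * z0 + d)^3) (at z0)"
      by (intro tendsto_intros)
    then show "((\<lambda>z. D * (c * z + d)^3) \<longlongrightarrow> 0) (at z0)"
      using \<open>c * z0 + d = 0\<close> by simp
    show "\<forall>\<^sub>F z in at z0. D * (c * z + d)^3 \<noteq> 0"
      using eventually_neq_at_within[of z0 z0 UNIV] D_nonzero
      by (auto simp: pole_iff z0_def elim: eventually_mono)
  qed
  moreover have "- ((a * z0 + b) * (Q z0)^2) \<noteq> 0"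
    using Q_pole_nonzero \<open>a * z0 + b \<noteq> 0\<close> by (simp add: z0_def)
  ultimately have "filterlim (\<lambda>z. - ((a * z + b) * (Q z)^2) / (D * (c * z + d)^3)) at_infinity (at z0)"
    by (rule filterlim_divide_at_infinity)
  then have "filterlim (\<lambda>z. z + - ((a * z + b) * (Q z)^2) / (D * (c * z + d)^3)) at_infinity (at z0)"
    by (rule tendsto_add_filterlim_at_infinity[OF tendsto_ident_at])
  then have "filterlim R at_infinity (at z0)"
    by (simp add: R_def[abs_def] P_def)
  then have "\<not> (\<exists>L. (Stirling (mobius a b c d) \<longlongrightarrow> L) (at z0))"
    using tendsto_cong[OF eventually_Stirling_eq_R] not_tendsto_and_filterlim_at_infinity
    by (metis at_neq_bot)
  then show ?thesis unfolding F_def sphere_ext_def z0_def by auto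
qed

lemma chart_representative_finite:
  assumes "c * z0 + d \<noteq> 0"
  shows "chart_representative F (Some z0) R"
proof -
  have "eventually (\<lambda>z. z \<noteq> - d / c) (nhds z0)"
    using assms pole_iff by (intro t1_space_nhds) blast
  then show ?thesis
    unfolding chart_representative_def sphere_chart_def chart_point_def option.case
    by eventually_elim (simp add: F_Some pole_iff)
qed

lemma F_fixed_point_Some:
  assumes "F (Some z0) = Some z0"
  shows "c * z0 + d \<noteq> 0" "R z0 = z0"
proof -
  show "c * z0 + d \<noteq> 0" using assms F_pole pole_iff by force
  then show "R z0 = z0" using assms F_Some by simp
qed

lemma R_fixed_point_deriv:
  assumes "c * z0 + d \<noteq> 0" "R z0 = z0"
  shows "(R has_field_derivative 0) (at z0) \<or> (R has_field_derivative 1) (at z0)"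
proof -
  define t where "t = c * z0 + d"
  define N' where "N' = a * (Q z0)^2 + (a * z0 + b) * (2 * Q z0 * (2 * c * t - c * a))"
  have "D * t^3 \<noteq> 0" using assms(1) D_nonzero by (simp add: t_def)
  have "(Q has_field_derivative 2 * c * t - c * a) (at z0)"
    unfolding Q_def[abs_def] t_def by (auto intro!: derivative_eq_intros simp: algebra_simps)
  then have dN: "((\<lambda>z. (a * z + b) * (Q z)^2) has_field_derivative N') (at z0)"
    unfolding N'_def by (auto intro!: derivative_eq_intros simp: algebra_simps)
  have dD: "((\<lambda>z. D * (c * z + d)^3) has_field_derivative D * (3 * t^2 * c)) (at z0)"
    unfolding t_def by (auto intro!: derivative_eq_intros simp: algebra_simps)
  have N0: "(a * z0 + b) * (Q z0)^2 = 0"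
    using assms(2) \<open>D * t^3 \<noteq> 0\<close> by (simp add: R_def P_def t_def)
  have "(P has_field_derivative N' / (D * t^3)) (at z0)"
    using DERIV_divide_numerator_zero[OF dN dD N0] \<open>D * t^3 \<noteq> 0\<close>
    unfolding P_def[abs_def] by (simp add: t_def)
  then have dR: "(R has_field_derivative 1 - N' / (D * t^3)) (at z0)"
    unfolding R_def[abs_def] by (intro derivative_intros)
  have "N' / (D * t^3) = 1 \<or> N' = 0"
    using N0
  proof (elim disjE[OF iffD1[OF mult_eq_0_iff]])
    assume "a * z0 + b = 0"
    moreover have "D - a * t = - c * (a * z0 + b)" by (simp add: D_def t_def algebra_simps)
    ultimately have "Q z0 = t^2" "D = a * t" by (simp_all add: Q_def t_def)
    then show ?thesis
      using \<open>a * z0 + b = 0\<close> \<open>D * t^3 \<noteq> 0\<close>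
      by (simp add: N'_def field_simps power_mult_distrib eval_nat_numeral flip: power_mult)
  qed (simp add: N'_def)
  then show ?thesis using dR by auto
qed

definition "Q_rev w = (c + d * w)^2 - c * w * (a + b * w)"
definition "den_inf w = D * w * (c + d * w)^3 - (a + b * w) * (Q_rev w)^2"
definition "R_inf w = w^2 * (D * (c + d * w)^3 / den_inf w)"

lemma den_inf_0: "den_inf 0 \<noteq> 0"
  using a_nonzero c_nonzero by (simp add: den_inf_def Q_rev_def)

lemma R_inverse:
  assumes "w \<noteq> 0" "c + d * w \<noteq> 0"
  shows "R (1 / w) = 1 / R_inf w"
proof -
  have "Q (1 / w) = Q_rev w / w^2"
    using assms by (simp add: Q_def Q_rev_def field_simps power2_eq_square)
  moreover have "a * (1 / w) + b = (a + b * w) / w" "c * (1 / w) + d = (c + d * w) / w"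
    using assms by (auto simp: field_simps)
  moreover have "1 / w - (A / w) * (q / w^2)^2 / (D * (T / w)^3) = (D * w * T^3 - A * q^2) / (D * w^2 * T^3)"
    if "T \<noteq> 0" for A q T
    using that assms(1) D_nonzero by (simp add: field_simps power2_eq_square power3_eq_cube)
  ultimately have "R (1 / w) = den_inf w / (D * w^2 * (c + d * w)^3)"
    using assms(2) by (simp add: R_def P_def den_inf_def)
  then show ?thesis by (simp add: R_inf_def)
qed

lemma eventually_near_infinity:
  "eventually (\<lambda>w. c * (1 / w) + d \<noteq> 0 \<and> Q (1 / w) \<noteq> 0 \<and> R_inf w \<noteq> 0 \<and>
     R (1 / w) = 1 / R_inf w) (at 0)"
proof -
  have nonzero_near_0: "eventually (\<lambda>w. f w \<noteq> 0) (at 0)" if "isCont f 0" "f 0 \<noteq> 0"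
    for f :: "complex \<Rightarrow> complex"
    using that by (simp add: isCont_def tendsto_imp_eventually_ne)
  have "eventually (\<lambda>w. c + d * w \<noteq> 0) (at 0)"
    using c_nonzero by (intro nonzero_near_0) (auto intro!: continuous_intros)
  moreover have "eventually (\<lambda>w. Q_rev w \<noteq> 0) (at 0)"
    using c_nonzero unfolding Q_rev_def by (intro nonzero_near_0) (auto intro!: continuous_intros)
  moreover have "eventually (\<lambda>w. den_inf w \<noteq> 0) (at 0)"
    using den_inf_0 unfolding den_inf_def Q_rev_def
    by (intro nonzero_near_0) (auto intro!: continuous_intros)
  moreover have "eventually (\<lambda>w. w \<noteq> 0) (at (0::complex))"
    by (rule eventually_neq_at_within)
  ultimately show ?thesis
  proof eventually_elim
    case (elim w)
    then have "c * (1 / w) + d = (c + d * w) / w" "Q (1 / w) = Q_rev w / w^2"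
      by (simp_all add: Q_def Q_rev_def field_simps power2_eq_square)
    then show ?case using elim R_inverse D_nonzero by (simp add: R_inf_def)
  qed
qed

lemma F_None: "F None = None"
proof -
  have "isCont R_inf 0"
    unfolding R_inf_def[abs_def] den_inf_def[abs_def] Q_rev_def[abs_def] using den_inf_0
    by (intro continuous_intros) (auto simp: den_inf_def Q_rev_def)
  then have "filterlim R_inf (at 0) (at 0)"
    using eventually_near_infinity
    by (intro filterlim_atI) (auto simp: isCont_def R_inf_def elim: eventually_mono)
  then have inf: "filterlim (\<lambda>w. inverse (R_inf w)) at_infinity (at 0)"
    using filterlim_compose[OF filterlim_inverse_at_infinity] by blast
  have "eventually (\<lambda>w. Stirling (mobius a b c d) (1 / w) = inverse (R_inf w)) (at 0)"
    using eventually_near_infinity by eventually_elim (simp add: Stirling_eq_R divide_inverse)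
  then have "\<not> (\<exists>L. ((\<lambda>w. Stirling (mobius a b c d) (1 / w)) \<longlongrightarrow> L) (at 0))"
    using tendsto_cong not_tendsto_and_filterlim_at_infinity[OF _ _ inf]
    by (metis at_neq_bot)
  then show ?thesis unfolding F_def sphere_ext_def by auto
qed

lemma chart_representative_infinity: "chart_representative F None R_inf"
proof -
  have "eventually (\<lambda>w. w \<noteq> 0 \<longrightarrow> F (inf_chart w) = inf_chart (R_inf w)) (nhds 0)"
    using eventually_near_infinity unfolding eventually_at_filter
    by eventually_elim (auto simp: inf_chart_def F_Some)
  then show ?thesis
    unfolding chart_representative_def sphere_chart_def chart_point_def option.case
    by eventually_elim (simp add: F_None c_nonzero inf_chart_def R_inf_def)
qed

lemma R_inf_deriv: "(R_inf has_field_derivative 0) (at 0)"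
  using den_inf_0 unfolding R_inf_def[abs_def] den_inf_def Q_rev_def
  by (auto intro!: derivative_eq_intros)

lemma fixed_point_multiplier_0_or_1:
  assumes "F p = p"
  shows "\<exists>g L. chart_representative F p g \<and> (g has_field_derivative L) (at (chart_point p))
           \<and> (L = 0 \<or> L = 1)"
proof (cases p)
  case None
  then show ?thesis
    using chart_representative_infinity R_inf_deriv by (auto simp: chart_point_def)
next
  case (Some z0)
  then have "c * z0 + d \<noteq> 0" "R z0 = z0" using F_fixed_point_Some assms by auto
  then have "\<exists>L. (R has_field_derivative L) (at z0) \<and> (L = 0 \<or> L = 1)"
    using R_fixed_point_deriv by blast
  then show ?thesis
    using chart_representative_finite[OF \<open>c * z0 + d \<noteq> 0\<close>] Some
    by (auto simp: chart_point_def)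
qed

end

theorem mainTheorem12:
  fixes a b c d :: complex
  assumes "a \<noteq> 0" and "c \<noteq> 0" and "a * d - b * c \<noteq> 0"
  shows "\<not> (\<exists>p. irrationally_indifferent_fixed_point
                 (sphere_ext (Stirling (mobius a b c d))) p)
       \<and> \<not> (\<exists>U. invariant_siegel_disc (sphere_ext (Stirling (mobius a b c d))) U)"
proof -
  interpret stirling_mobius a b c d using assms by unfold_locales
  show ?thesis
    using no_irrational_rotation_if_multipliers_0_or_1[OF fixed_point_multiplier_0_or_1]
    unfolding F_def .
qed

end
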